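(* Let $q$ be a prime power and $k\ge3$, $u$, $h\ge1$ integers with $q\ge u\ge 2$. Let $U_1,\dots,U_h$ be $u$-dimensional subspaces of $\mathbf F_q^k$ with $U_i\cap U_j=\{0\}$ for $i\ne j$, and assume $q^k-q^{k-1}>h(q^u-1)$. Let $U$ be the set of nonzero vectors of $\mathbf F_q^k$ not in $U_1\cup\dots\cup U_h$, let $\widetilde G$ be a matrix whose columns consist of exactly one representative of each class $\{\lambda\mathbf v:\lambda\in\mathbf F_q^*\}$, $\mathbf v\in U$, and let $\mathbf C$ be the linear code with generator matrix $\widetilde G$, with parameters $\big[\frac{(q^k-1)-h(q^u-1)}{q-1},k,d=q^{k-1}-hq^{u-1}\big]_q$. If $h\le uq$, then $\mathbf C$ is distance optimal. In particular, if $u=2$ and $h\le 2q$, then $\mathbf C$ is distance optimal.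
   Context: A linear $[n,k,d]_q$ code is distance optimal if no linear $[n,k,d+1]_q$ code exists. *)

theory Defs
  imports "HOL-Analysis.Analysis"
begin

text \<open>Codes of length n over a finite field 'a are subsets of 'a ^ 'm with CARD('m) = n.\<close>

definition hamming_dist :: "'a ^ 'm \<Rightarrow> 'a ^ 'm \<Rightarrow> nat" where
  "hamming_dist x y = card {i. x $ i \<noteq> y $ i}"

definition min_dist :: "('a ^ 'm) set \<Rightarrow> nat" where
  "min_dist C = Min {hamming_dist x y | x y. x \<in> C \<and> y \<in> C \<and> x \<noteq> y}"

definition linear_code :: "nat \<Rightarrow> nat \<Rightarrow> ('a::field ^ 'm) set \<Rightarrow> bool" where
  "linear_code k d C \<longleftrightarrow> vec.subspace C \<and> vec.dim C = k \<and> min_dist C = d"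

definition distance_optimal :: "('a::field ^ 'm) set \<Rightarrow> bool" where
  "distance_optimal C \<longleftrightarrow>
     \<not> (\<exists>C' :: ('a ^ 'm) set. linear_code (vec.dim C) (min_dist C + 1) C')"

text \<open>Linear code generated by a k x n matrix (rows indexed by 'n, columns by 'm).\<close>
definition gen_code :: "'a::field ^ 'm ^ 'n \<Rightarrow> ('a ^ 'm) set" where
  "gen_code G = {x v* G | x. True}"

end

theory Submission
  imports Defs
begin

text \<open>The columns of \<open>G\<close> represent the points of \<open>PG(k-1, q)\<close> outside the subspaces
  \<open>Us i\<close>, and the codeword \<open>x v* G\<close> vanishes exactly at the columns lying in the hyperplane
  orthogonal to \<open>x\<close>. Off this hyperplane lie \<open>q^k - q^(k-1)\<close> vectors, of which at most
  \<open>q^u - q^(u-1)\<close> belong to each \<open>Us i\<close>; dividing by \<open>q - 1\<close>, every nonzero codeword has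
  weight at least \<open>D = q^(k-1) - h q^(u-1)\<close>. So \<open>G\<close> generates an \<open>[n, k, \<ge> D]\<close> code with
  \<open>(q - 1) n = q^k - 1 - h (q^u - 1)\<close>.

  An \<open>[n, k, d + 1]\<close> code with \<open>d \<ge> D\<close> would violate the Griesmer bound
  \<open>n \<ge> (\<Sum>i<k. \<lceil>(d + 1) / q^i\<rceil>)\<close>, proved by the usual induction on residual codes.
  Writing \<open>D + 1 = q^(k-1) - a\<close> with \<open>a = h q^(u-1) - 1\<close>, the Griesmer sum for \<open>D + 1\<close> is
  \<open>(q^k - 1) / (q - 1) - (\<Sum>i<k. \<lfloor>a / q^i\<rfloor>)\<close>, and the base-\<open>q\<close> digits of \<open>a\<close> give
  \<open>(\<Sum>i<k. \<lfloor>a / q^i\<rfloor>) < h (q^u - 1) / (q - 1)\<close> as soon as \<open>h \<le> u q\<close>.\<close>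

section \<open>Counting vectors in finite vector spaces\<close>

lemma two_le_card_field: "2 \<le> CARD('a::{finite,field})"
  using card_mono[of UNIV "{0::'a, 1}"] by simp

lemma card_subspace:
  fixes V :: "('a::{finite,field} ^ 'n) set"
  assumes "vec.subspace V"
  shows "card V = CARD('a) ^ vec.dim V"
proof -
  obtain B where B: "B \<subseteq> V" "vec.independent B" "V \<subseteq> vec.span B" "card B = vec.dim V"
    using vec.basis_exists by blast
  define comb where "comb g = (\<Sum>v\<in>B. g v *s v)" for g :: "'a ^ 'n \<Rightarrow> 'a"
  have "V = vec.span B"
    using B assms vec.span_minimal by blast
  also have "\<dots> = comb ` (B \<rightarrow>\<^sub>E UNIV)"
  proof -
    have "comb g = comb (restrict g B)" for g
      unfolding comb_def by (rule sum.cong) auto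
    then show ?thesis
      unfolding vec.span_finite[OF finite] comb_def[symmetric] by force
  qed
  finally have V: "V = comb ` (B \<rightarrow>\<^sub>E UNIV)" .
  have "inj_on comb (B \<rightarrow>\<^sub>E UNIV)"
  proof (rule inj_onI)
    fix g g' assume g: "g \<in> B \<rightarrow>\<^sub>E UNIV" and g': "g' \<in> B \<rightarrow>\<^sub>E UNIV" and "comb g = comb g'"
    then have "(\<Sum>v\<in>B. (g v - g' v) *s v) = 0"
      unfolding comb_def by (simp add: vector_sub_rdistrib sum_subtractf)
    then have "g v - g' v = 0" if "v \<in> B" for v
      by (rule vec.independentD[OF B(2) finite order.refl _ that])
    then show "g = g'"
      using g g' by (auto intro: PiE_ext)
  qed
  then have "card V = card (B \<rightarrow>\<^sub>E (UNIV :: 'a set))"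
    unfolding V by (rule card_image)
  then show ?thesis
    using B(4) by (simp add: card_PiE)
qed

lemma card_subspace_functional_nonzero:
  fixes V :: "('a::{finite,field} ^ 'n) set" and f :: "'a ^ 'n \<Rightarrow> 'a"
  assumes V: "vec.subspace V"
    and f_add: "\<And>v w. f (v + w) = f v + f w"
    and f_scale: "\<And>c v. f (c *s v) = c * f v"
    and v: "v \<in> V" "f v \<noteq> 0"
  shows "card {w \<in> V. f w \<noteq> 0} = CARD('a) ^ vec.dim V - CARD('a) ^ (vec.dim V - 1)"
proof -
  define K where "K = {w \<in> V. f w = 0}"
  define e where "e = inverse (f v) *s v"
  have e: "e \<in> V" "f e = 1"
    using v V unfolding e_def by (simp_all add: f_scale vec.subspace_scale)
  have f_diff: "f (w - w') = f w - f w'" for w w'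
    using f_add[of "w - w'" w'] by (simp add: algebra_simps)
  have "bij_betw (\<lambda>w. (f w, w - f w *s e)) V (UNIV \<times> K)"
    by (rule bij_betwI[where g = "\<lambda>(t, w). w + t *s e"])
      (use V e in \<open>auto simp: K_def f_add f_diff f_scale vec.subspace_add vec.subspace_diff vec.subspace_scale\<close>)
  then have "card V = CARD('a) * card K"
    by (simp add: bij_betw_same_card card_cartesian_product)
  then have "CARD('a) ^ vec.dim V = CARD('a) * card K"
    using card_subspace[OF V] by simp
  then have K_card: "card K = CARD('a) ^ (vec.dim V - 1)"
    using two_le_card_field[where 'a = 'a] by (cases "vec.dim V") auto
  have "{w \<in> V. f w \<noteq> 0} = V - K"
    unfolding K_def by blast
  then show ?thesis
    using card_subspace[OF V] K_card by (simp add: K_def card_Diff_subset)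
qed

lemma card_eq_card_image_mult_card_kernel:
  fixes C :: "('a::{finite,field} ^ 'm) set" and p :: "'a ^ 'm \<Rightarrow> 'a ^ 'k"
  assumes p: "Vector_Spaces.linear (*s) (*s) p" and C: "vec.subspace C"
  shows "card C = card (p ` C) * card {x \<in> C. p x = 0}"
proof -
  let ?K = "{x \<in> C. p x = 0}"
  have fiber: "card {x \<in> C. p x = y} = card ?K" if "y \<in> p ` C" for y
  proof -
    obtain x0 where x0: "x0 \<in> C" "y = p x0"
      using \<open>y \<in> p ` C\<close> by blast
    have "{x \<in> C. p x = y} = (+) x0 ` ?K"
    proof (intro equalityI subsetI)
      fix x assume "x \<in> {x \<in> C. p x = y}"
      then have "x - x0 \<in> ?K" "x = x0 + (x - x0)"
        using x0 C p by (simp_all add: vec.subspace_diff vec.linear_diff)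
      then show "x \<in> (+) x0 ` ?K"
        by blast
    qed (use x0 C p in \<open>auto simp: vec.subspace_add vec.linear_add\<close>)
    then show ?thesis
      by (simp add: card_image)
  qed
  have "card C = card (\<Union>y \<in> p ` C. {x \<in> C. p x = y})"
    by (rule arg_cong[where f = card]) blast
  also have "\<dots> = (\<Sum>y \<in> p ` C. card {x \<in> C. p x = y})"
    by (rule card_UN_disjoint) auto
  also have "\<dots> = card (p ` C) * card ?K"
    using fiber by simp
  finally show ?thesis .
qed

section \<open>The Griesmer bound\<close>

definition ceil_div :: "nat \<Rightarrow> nat \<Rightarrow> nat" where
  "ceil_div a b = (a + b - 1) div b"

lemma ceil_div_1 [simp]: "ceil_div a (Suc 0) = a"
  unfolding ceil_div_def by simp

lemma ceil_div_le:
  assumes "0 < b" "a \<le> b * m"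
  shows "ceil_div a b \<le> m"
proof -
  have "a + b - 1 < (m + 1) * b"
    using assms by (simp add: algebra_simps)
  then have "(a + b - 1) div b < m + 1"
    using assms(1) by (simp only: div_less_iff_less_mult)
  then show ?thesis
    unfolding ceil_div_def by simp
qed

lemma ceil_div_mono: "a \<le> a' \<Longrightarrow> ceil_div a b \<le> ceil_div a' b"
  unfolding ceil_div_def by (simp add: div_le_mono)

lemma ceil_div_ceil_div:
  assumes "0 < b" "0 < c"
  shows "ceil_div (ceil_div a b) c = ceil_div a (b * c)"
proof -
  obtain c' where c': "c = Suc c'"
    using assms(2) gr0_implies_Suc by blast
  define e where "e = a + b - 1"
  have "a + b * c - 1 = e + b * c'"
    using assms(1) unfolding c' e_def by simp
  then have "(a + b * c - 1) div b = e div b + c'"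
    using assms(1) by simp
  then have "ceil_div a (b * c) = (e div b + c') div c"
    unfolding ceil_div_def by (simp add: div_mult2_eq)
  also have "\<dots> = ceil_div (ceil_div a b) c"
    unfolding ceil_div_def e_def c' by simp
  finally show ?thesis ..
qed

definition hamming_weight :: "'a::zero ^ 'm \<Rightarrow> nat" where
  "hamming_weight x = card {i. x $ i \<noteq> 0}"

lemma hamming_weight_0 [simp]: "hamming_weight 0 = 0"
  unfolding hamming_weight_def by simp

lemma hamming_weight_eq_0_iff [simp]: "hamming_weight x = 0 \<longleftrightarrow> x = 0"
  unfolding hamming_weight_def by (simp add: vec_eq_iff)

lemma hamming_dist_eq_weight:
  fixes x y :: "'a::ab_group_add ^ 'm"
  shows "hamming_dist x y = hamming_weight (x - y)"
  unfolding hamming_dist_def hamming_weight_def by simp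

lemma min_dist_subspace:
  fixes C :: "('a::{finite,field} ^ 'm) set"
  assumes "vec.subspace C"
  shows "min_dist C = Min (hamming_weight ` (C - {0}))"
proof -
  have "{hamming_dist x y | x y. x \<in> C \<and> y \<in> C \<and> x \<noteq> y} = hamming_weight ` (C - {0})"
  proof (intro equalityI subsetI)
    fix n assume "n \<in> {hamming_dist x y | x y. x \<in> C \<and> y \<in> C \<and> x \<noteq> y}"
    then show "n \<in> hamming_weight ` (C - {0})"
      using assms by (auto simp: hamming_dist_eq_weight vec.subspace_diff)
  next
    fix n assume "n \<in> hamming_weight ` (C - {0})"
    then obtain x where "x \<in> C" "x \<noteq> 0" "n = hamming_dist x 0"
      by (auto simp: hamming_dist_eq_weight)
    then show "n \<in> {hamming_dist x y | x y. x \<in> C \<and> y \<in> C \<and> x \<noteq> y}"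
      using assms vec.subspace_0 by blast
  qed
  then show ?thesis
    unfolding min_dist_def by simp
qed

text \<open>The residual code with respect to a codeword \<open>c\<close> punctures the support of \<open>c\<close>.
  We zero these coordinates instead of deleting them, so the residual code stays in the same
  space; the Griesmer bound then keeps track of the set \<open>S\<close> of coordinates still in use.\<close>

definition residual :: "'a::zero ^ 'm \<Rightarrow> 'a ^ 'm \<Rightarrow> 'a ^ 'm" where
  "residual c x = (\<chi> i. if c $ i = 0 then x $ i else 0)"

lemma linear_residual: "Vector_Spaces.linear (*s) (*s) (residual (c :: 'a::field ^ 'm))"
  unfolding residual_def by unfold_locales (auto simp: vec_eq_iff)

lemma residual_self [simp]: "residual c c = 0"
  unfolding residual_def by (simp add: vec_eq_iff)

text \<open>Averaging: on the support of \<open>c\<close>, the coordinate of \<open>x - \<alpha> c\<close> vanishes for exactly one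
  \<open>\<alpha>\<close>, so summing \<open>hamming_weight c \<le> hamming_weight (x - \<alpha> c)\<close> over all \<open>\<alpha>\<close> leaves only the
  contribution of the residual.\<close>

lemma min_weight_le_card_mult_weight_residual:
  fixes C :: "('a::{finite,field} ^ 'm) set"
  assumes C: "vec.subspace C" and c: "c \<in> C"
    and c_min: "\<And>y. y \<in> C \<Longrightarrow> y \<noteq> 0 \<Longrightarrow> hamming_weight c \<le> hamming_weight y"
    and x: "x \<in> C" "\<And>\<alpha>. x \<noteq> \<alpha> *s c"
  shows "hamming_weight c \<le> CARD('a) * hamming_weight (residual c x)"
proof -
  define T where "T = {i. c $ i \<noteq> 0}"
  define w where "w = hamming_weight (residual c x)"
  define A where "A \<alpha> = card {i \<in> T. x $ i \<noteq> \<alpha> * c $ i}" for \<alpha>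
  have w: "w = card {i. i \<notin> T \<and> x $ i \<noteq> 0}"
    unfolding w_def hamming_weight_def residual_def T_def by (rule arg_cong[where f = card]) auto
  have each: "card T \<le> A \<alpha> + w" for \<alpha>
  proof -
    have "x - \<alpha> *s c \<in> C" "x - \<alpha> *s c \<noteq> 0"
      using C c x by (simp_all add: vec.subspace_diff vec.subspace_scale)
    then have "card T \<le> hamming_weight (x - \<alpha> *s c)"
      using c_min unfolding hamming_weight_def T_def by blast
    also have "{i. (x - \<alpha> *s c) $ i \<noteq> 0} = {i \<in> T. x $ i \<noteq> \<alpha> * c $ i} \<union> {i. i \<notin> T \<and> x $ i \<noteq> 0}"
      unfolding T_def by auto
    then have "hamming_weight (x - \<alpha> *s c) = A \<alpha> + w"
      unfolding hamming_weight_def w A_def by (simp add: card_Un_disjoint disjoint_iff)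
    finally show ?thesis .
  qed
  have "(\<Sum>\<alpha>\<in>UNIV. A \<alpha>) = (\<Sum>\<alpha>\<in>UNIV. \<Sum>i\<in>T. if x $ i \<noteq> \<alpha> * c $ i then 1 else 0)"
    unfolding A_def by (simp add: sum.If_cases Int_def)
  also have "\<dots> = (\<Sum>i\<in>T. \<Sum>\<alpha>\<in>UNIV. if x $ i \<noteq> \<alpha> * c $ i then 1 else 0)"
    by (rule sum.swap)
  also have "\<dots> = (\<Sum>i\<in>T. card {\<alpha>. x $ i \<noteq> \<alpha> * c $ i})"
    by (simp add: sum.If_cases Int_def)
  also have "\<dots> = (\<Sum>i\<in>T. CARD('a) - 1)"
  proof (rule sum.cong[OF refl])
    fix i assume "i \<in> T"
    then have "{\<alpha>. x $ i \<noteq> \<alpha> * c $ i} = UNIV - {x $ i / c $ i}"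
      unfolding T_def by (auto simp: field_simps)
    then show "card {\<alpha>. x $ i \<noteq> \<alpha> * c $ i} = CARD('a) - 1"
      by (simp add: card_Diff_singleton)
  qed
  finally have sum_A: "(\<Sum>\<alpha>\<in>UNIV. A \<alpha>) = card T * (CARD('a) - 1)"
    by simp
  have "CARD('a) * card T = (\<Sum>\<alpha>\<in>(UNIV :: 'a set). card T)"
    by simp
  also have "\<dots> \<le> (\<Sum>\<alpha>\<in>UNIV. A \<alpha> + w)"
    by (rule sum_mono) (rule each)
  also have "\<dots> = card T * (CARD('a) - 1) + CARD('a) * w"
    by (simp add: sum.distrib sum_A)
  finally have "CARD('a) * card T \<le> card T * (CARD('a) - 1) + CARD('a) * w" .
  moreover have "CARD('a) * card T = card T * (CARD('a) - 1) + card T"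
    by (cases "CARD('a)") simp_all
  ultimately have "card T \<le> CARD('a) * w"
    by linarith
  then show ?thesis
    unfolding w_def hamming_weight_def[of c] T_def .
qed

lemma card_residual_code:
  fixes C :: "('a::{finite,field} ^ 'm) set"
  assumes C: "vec.subspace C" and c: "c \<in> C" "c \<noteq> 0"
    and c_min: "\<And>y. y \<in> C \<Longrightarrow> y \<noteq> 0 \<Longrightarrow> hamming_weight c \<le> hamming_weight y"
  shows "card C = card (residual c ` C) * CARD('a)"
proof -
  have "{x \<in> C. residual c x = 0} = range (\<lambda>\<alpha>. \<alpha> *s c)"
  proof (intro equalityI subsetI)
    fix x assume x: "x \<in> {x \<in> C. residual c x = 0}"
    show "x \<in> range (\<lambda>\<alpha>. \<alpha> *s c)"
    proof (rule ccontr)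
      assume "x \<notin> range (\<lambda>\<alpha>. \<alpha> *s c)"
      then have "hamming_weight c \<le> CARD('a) * hamming_weight (residual c x)"
        using min_weight_le_card_mult_weight_residual[OF C c(1) c_min] x by blast
      then show False
        using x c(2) by simp
    qed
  qed (use C c in \<open>auto simp: vec.subspace_scale vec.linear_scale[OF linear_residual]\<close>)
  moreover have "card (range (\<lambda>\<alpha>. \<alpha> *s c)) = CARD('a)"
    using c(2) by (simp add: card_image inj_on_def vector_mul_rcancel)
  ultimately show ?thesis
    using card_eq_card_image_mult_card_kernel[OF linear_residual[of c] C] by simp
qed

lemma griesmer_bound_support:
  fixes C :: "('a::{finite,field} ^ 'm) set"
  assumes "vec.subspace C" "card C = CARD('a) ^ k"
    and "\<And>x i. x \<in> C \<Longrightarrow> i \<notin> S \<Longrightarrow> x $ i = 0"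
    and "\<And>x. x \<in> C \<Longrightarrow> x \<noteq> 0 \<Longrightarrow> d \<le> hamming_weight x"
  shows "(\<Sum>i<k. ceil_div d (CARD('a) ^ i)) \<le> card S"
  using assms
proof (induction k arbitrary: C S d)
  case 0
  then show ?case
    by simp
next
  case (Suc k)
  let ?q = "CARD('a)"
  have "\<not> C \<subseteq> {0}"
  proof
    assume "C \<subseteq> {0}"
    then have "card C \<le> 1"
      using card_mono[of "{0}" C] by simp
    then show False
      using Suc.prems(2) two_le_card_field[where 'a = 'a] one_less_power[of ?q "Suc k"] by simp
  qed
  then obtain y where "y \<in> C" "y \<noteq> 0"
    by blast
  then obtain c where c: "c \<in> C" "c \<noteq> 0"
    and c_min: "\<And>y. y \<in> C \<Longrightarrow> y \<noteq> 0 \<Longrightarrow> hamming_weight c \<le> hamming_weight y"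
    using ex_has_least_nat[of "\<lambda>y. y \<in> C \<and> y \<noteq> 0" y hamming_weight] by blast
  define T where "T = {i. c $ i \<noteq> 0}"
  have T: "T \<subseteq> S" "d \<le> card T"
    using Suc.prems(3,4) c unfolding T_def hamming_weight_def by blast+
  have "vec.subspace (residual c ` C)"
    by (rule vec.linear_subspace_image[OF linear_residual Suc.prems(1)])
  moreover have "card (residual c ` C) = ?q ^ k"
    using card_residual_code[OF Suc.prems(1) c c_min] Suc.prems(2) by simp
  moreover have "x $ i = 0" if "x \<in> residual c ` C" "i \<notin> S - T" for x i
    using that Suc.prems(3) unfolding residual_def T_def by auto
  moreover have "ceil_div d ?q \<le> hamming_weight y" if y: "y \<in> residual c ` C" "y \<noteq> 0" for y
  proof -
    obtain x where x: "x \<in> C" "y = residual c x"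
      using y(1) by blast
    have "x \<noteq> \<alpha> *s c" for \<alpha>
      using x(2) y(2) vec.linear_scale[OF linear_residual, of c \<alpha> c] by auto
    then have "hamming_weight c \<le> ?q * hamming_weight y"
      using min_weight_le_card_mult_weight_residual[OF Suc.prems(1) c(1) c_min x(1)] x(2) by blast
    then have "d \<le> ?q * hamming_weight y"
      using T(2) unfolding hamming_weight_def[of c] T_def by linarith
    then show ?thesis
      by (simp add: ceil_div_le)
  qed
  ultimately have IH: "(\<Sum>i<k. ceil_div (ceil_div d ?q) (?q ^ i)) \<le> card (S - T)"
    by (rule Suc.IH)
  have "(\<Sum>i<Suc k. ceil_div d (?q ^ i)) = d + (\<Sum>i<k. ceil_div (ceil_div d ?q) (?q ^ i))"
    by (subst sum.lessThan_Suc_shift) (simp add: ceil_div_ceil_div)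
  also have "\<dots> \<le> card T + card (S - T)"
    using IH T(2) by simp
  also have "\<dots> = card S"
    using T(1) by (simp add: card_Diff_subset card_mono)
  finally show ?case .
qed

lemma griesmer_bound:
  fixes C :: "('a::{finite,field} ^ 'm) set"
  assumes "linear_code k d C"
  shows "(\<Sum>i<k. ceil_div d (CARD('a) ^ i)) \<le> CARD('m)"
proof -
  have C: "vec.subspace C" "card C = CARD('a) ^ k" "min_dist C = d"
    using assms card_subspace unfolding linear_code_def by auto
  have "d \<le> hamming_weight x" if "x \<in> C" "x \<noteq> 0" for x
    using that C(1,3) by (auto simp: min_dist_subspace)
  then show ?thesis
    using griesmer_bound_support[OF C(1,2), of UNIV d] by simp
qed

section \<open>The Griesmer sum of the designed distance\<close>

lemma nat_power_diff_1_eq: "(q::nat) ^ n - 1 = (q - 1) * (\<Sum>i<n. q ^ i)"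
proof (cases "q = 0")
  case True
  then show ?thesis
    by (cases n) simp_all
next
  case False
  then have "int (q ^ n - 1) = int q ^ n - 1"
    by (simp add: of_nat_diff)
  also have "\<dots> = (int q - 1) * (\<Sum>i<n. int q ^ i)"
    by (rule power_diff_1_eq)
  also have "\<dots> = int ((q - 1) * (\<Sum>i<n. q ^ i))"
    using False by (simp add: of_nat_diff)
  finally show ?thesis
    by (rule of_nat_eq_iff[THEN iffD1])
qed

lemma power_diff_power_pred: "1 \<le> j \<Longrightarrow> (q::nat) ^ j - q ^ (j - 1) = (q - 1) * q ^ (j - 1)"
  by (cases j) (simp_all add: diff_mult_distrib)

lemma mult_power_pred_less:
  fixes q h u k :: nat
  assumes "0 < q" "1 \<le> u" "1 \<le> k" and less: "h * (q ^ u - 1) < q ^ k - q ^ (k - 1)"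
  shows "h * q ^ (u - 1) < q ^ (k - 1)"
proof -
  have "(q - 1) * (h * q ^ (u - 1)) = h * (q ^ u - q ^ (u - 1))"
    using power_diff_power_pred[OF assms(2), of q] by simp
  also have "\<dots> \<le> h * (q ^ u - 1)"
    using assms(1) by (intro mult_le_mono2 diff_le_mono2) simp
  also have "\<dots> < (q - 1) * q ^ (k - 1)"
    using less power_diff_power_pred[OF assms(3), of q] by simp
  finally show ?thesis
    by simp
qed

lemma pred_mult_div: "0 < b \<Longrightarrow> (m * b - 1) div b = m - (1::nat)"
proof (cases m)
  case (Suc m')
  assume "0 < b"
  have "(m * b - 1) div b = m'"
    by (rule div_nat_eqI) (use \<open>0 < b\<close> Suc in \<open>simp_all add: algebra_simps\<close>)
  then show ?thesis
    using Suc by simp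
qed simp

lemma ceil_div_diff_add_div:
  assumes b: "0 < b" and a: "a \<le> m * b"
  shows "ceil_div (m * b - a) b + a div b = m"
proof -
  have "a div b * b \<le> m * b"
    using a div_mult_mod_eq[of a b] by linarith
  then have le: "a div b \<le> m"
    using b by simp
  have "m * b - a + b - 1 = (b - 1 - a mod b) + (m - a div b) * b"
    using a div_mult_mod_eq[of a b] mod_less_divisor[OF b, of a] le
    by (simp add: diff_mult_distrib)
  then have "ceil_div (m * b - a) b = m - a div b"
    unfolding ceil_div_def using b by simp
  then show ?thesis
    using le by simp
qed

text \<open>For \<open>i < u\<close> the quotient is \<open>h q^(u-1-i) - 1\<close>; the quotient for \<open>i = u\<close> is
  \<open>(h - 1) div q < u\<close>, and all later ones vanish because \<open>h - 1 < u q \<le> q\<^sup>2\<close>.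
  This is the only place where \<open>h \<le> u q\<close> is needed.\<close>

lemma sum_div_powers_less:
  fixes q h u k :: nat
  assumes q: "2 \<le> q" and h: "1 \<le> h" "h \<le> u * q" and u: "u \<le> q"
  shows "(\<Sum>i<k. (h * q ^ (u - 1) - 1) div q ^ i) < h * (\<Sum>i<u. q ^ i)"
proof -
  define a where "a = h * q ^ (u - 1) - 1"
  have "1 \<le> u"
    using h by (cases u) auto
  have low: "a div q ^ i = h * q ^ (u - 1 - i) - 1" if "i < u" for i
  proof -
    have "q ^ (u - 1) = q ^ (u - 1 - i) * q ^ i"
      using that by (simp flip: power_add)
    then have "a = h * q ^ (u - 1 - i) * q ^ i - 1"
      unfolding a_def by (simp add: mult.assoc)
    then show ?thesis
      by (simp only:) (rule pred_mult_div, use q in simp)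
  qed
  have high: "a div q ^ i = (h - 1) div q ^ (i - (u - 1))" if "u - 1 \<le> i" for i
  proof -
    have "a div q ^ (u - 1) = h - 1"
      using low[of "u - 1"] \<open>1 \<le> u\<close> by simp
    moreover have "q ^ i = q ^ (u - 1) * q ^ (i - (u - 1))"
      using that by (simp flip: power_add)
    ultimately show ?thesis
      by (simp add: div_mult2_eq)
  qed
  have "h - 1 < u * q"
    using h by linarith
  then have "(h - 1) div q < u"
    by (rule less_mult_imp_div_less)
  then have top: "a div q ^ u \<le> u - 1"
    using high[of u] \<open>1 \<le> u\<close> by simp
  have vanish: "a div q ^ i = 0" if "u < i" for i
  proof -
    have "u * q \<le> q ^ 2"
      using u by (simp add: power2_eq_square)
    also have "\<dots> \<le> q ^ (i - (u - 1))"
      using q that \<open>1 \<le> u\<close> by (intro power_increasing) auto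
    finally show ?thesis
      using high[of i] that \<open>h - 1 < u * q\<close> by simp
  qed
  have "(\<Sum>i<k. a div q ^ i) = (\<Sum>i \<in> {..<k} \<inter> {..<Suc u}. a div q ^ i)"
    by (rule sum.mono_neutral_right) (auto intro!: vanish)
  also have "\<dots> \<le> (\<Sum>i<Suc u. a div q ^ i)"
    by (rule sum_mono2) auto
  also have "\<dots> \<le> (\<Sum>i<u. h * q ^ (u - 1 - i) - 1) + (u - 1)"
    using low top by simp
  finally have upper: "(\<Sum>i<k. a div q ^ i) \<le> (\<Sum>i<u. h * q ^ (u - 1 - i) - 1) + (u - 1)" .
  have "(\<Sum>i<u. h * q ^ (u - 1 - i) - 1) + u = (\<Sum>i<u. h * q ^ (u - 1 - i) - 1 + 1)"
    by (simp only: sum.distrib) simp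
  also have "\<dots> = h * (\<Sum>i<u. q ^ (u - Suc i))"
    using h q by (simp add: sum_distrib_left)
  also have "\<dots> = h * (\<Sum>i<u. q ^ i)"
    by (simp only: sum.nat_diff_reindex)
  finally show ?thesis
    using upper \<open>1 \<le> u\<close> unfolding a_def by linarith
qed

lemma griesmer_sum_gt:
  fixes q h u k :: nat
  assumes q: "2 \<le> q" and u: "u \<le> q" and h: "1 \<le> h" "h \<le> u * q"
    and hk: "h * q ^ (u - 1) < q ^ (k - 1)"
  shows "q ^ k - 1 - h * (q ^ u - 1) < (q - 1) * (\<Sum>i<k. ceil_div (q ^ (k - 1) - h * q ^ (u - 1) + 1) (q ^ i))"
proof -
  define a where "a = h * q ^ (u - 1) - 1"
  define C where "C = (\<Sum>i<k. ceil_div (q ^ (k - 1) - a) (q ^ i))"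
  define A where "A = (\<Sum>i<k. a div q ^ i)"
  have "1 \<le> h * q ^ (u - 1)"
    using h q by simp
  then have d: "q ^ (k - 1) - h * q ^ (u - 1) + 1 = q ^ (k - 1) - a"
    using hk unfolding a_def by linarith
  have "1 \<le> k"
    using hk \<open>1 \<le> h * q ^ (u - 1)\<close> q by (cases k) auto
  have "C + A = (\<Sum>i<k. q ^ (k - Suc i))"
  proof -
    have "ceil_div (q ^ (k - 1) - a) (q ^ i) + a div q ^ i = q ^ (k - Suc i)" if "i < k" for i
    proof -
      have "q ^ (k - 1) = q ^ (k - Suc i) * q ^ i"
        using that by (simp flip: power_add)
      moreover have "a \<le> q ^ (k - 1)"
        using hk unfolding a_def by linarith
      ultimately show ?thesis
        using q by (simp add: ceil_div_diff_add_div)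
    qed
    then show ?thesis
      unfolding C_def A_def sum.distrib[symmetric] by simp
  qed
  then have "(q - 1) * C + (q - 1) * A = (q - 1) * (\<Sum>i<k. q ^ i)"
    by (simp add: sum.nat_diff_reindex flip: add_mult_distrib2)
  also have "\<dots> = q ^ k - 1"
    by (rule nat_power_diff_1_eq[symmetric])
  finally have "(q - 1) * C + (q - 1) * A = q ^ k - 1" .
  moreover have "(q - 1) * A + (q - 1) \<le> h * (q ^ u - 1)"
  proof -
    have "A + 1 \<le> h * (\<Sum>i<u. q ^ i)"
      using sum_div_powers_less[OF q h u] unfolding A_def a_def by (simp add: Suc_le_eq)
    then have "(q - 1) * (A + 1) \<le> (q - 1) * (h * (\<Sum>i<u. q ^ i))"
      by (rule mult_le_mono2)
    also have "\<dots> = h * ((q - 1) * (\<Sum>i<u. q ^ i))"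
      by (rule mult.left_commute)
    also have "(q - 1) * (\<Sum>i<u. q ^ i) = q ^ u - 1"
      by (rule nat_power_diff_1_eq[symmetric])
    finally show ?thesis
      by (simp only: add_mult_distrib2 mult_1_right)
  qed
  moreover have "1 \<le> (q - 1) * C"
  proof -
    have "ceil_div (q ^ (k - 1) - a) (q ^ 0) \<le> C"
      unfolding C_def using \<open>1 \<le> k\<close> by (intro member_le_sum) auto
    then have "1 \<le> C"
      using hk unfolding a_def by simp
    then show ?thesis
      using q by simp
  qed
  ultimately show ?thesis
    unfolding d C_def[symmetric] using q by linarith
qed

section \<open>The code of the points outside the subspaces\<close>

lemma card_columns_mult:
  fixes G :: "'a::{finite,field} ^ 'm ^ 'n" and U :: "('a ^ 'n) set"
  assumes scale_closed: "\<And>c v. v \<in> U \<Longrightarrow> c \<noteq> 0 \<Longrightarrow> c *s v \<in> U"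
    and zero: "0 \<notin> U"
    and columns: "\<And>j. column j G \<in> U"
    and unique: "\<And>v. v \<in> U \<Longrightarrow> \<exists>!j. \<exists>c. c \<noteq> 0 \<and> column j G = c *s v"
    and P: "\<And>c v. c \<noteq> 0 \<Longrightarrow> P (c *s v) = P v"
  shows "card {j. P (column j G)} * (CARD('a) - 1) = card {v \<in> U. P v}"
proof -
  have "bij_betw (\<lambda>(j, c). c *s column j G) ({j. P (column j G)} \<times> (UNIV - {0})) {v \<in> U. P v}"
  proof (rule bij_betw_imageI)
    have "j = j' \<and> c = c'"
      if c: "c \<noteq> 0" "c' \<noteq> 0" and eq: "c *s column j G = c' *s column j' G" for j j' c c'
    proof -
      have "column j' G = inverse c' *s (c' *s column j' G)"
        using c by simp
      also have "\<dots> = (inverse c' * c) *s column j G"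
        by (simp add: eq[symmetric])
      finally have "\<exists>d. d \<noteq> 0 \<and> column j' G = d *s column j G"
        using c by (intro exI[of _ "inverse c' * c"]) simp
      moreover have "\<exists>d. d \<noteq> 0 \<and> column j G = d *s column j G"
        by (intro exI[of _ 1]) simp
      ultimately have "j' = j"
        using unique[OF columns[of j]] by blast
      then show ?thesis
        using eq zero columns[of j] by (auto simp: vector_mul_rcancel)
    qed
    then show "inj_on (\<lambda>(j, c). c *s column j G) ({j. P (column j G)} \<times> (UNIV - {0}))"
      by (auto intro!: inj_onI)
    show "(\<lambda>(j, c). c *s column j G) ` ({j. P (column j G)} \<times> (UNIV - {0})) = {v \<in> U. P v}"
    proof (intro equalityI subsetI)
      fix v assume "v \<in> (\<lambda>(j, c). c *s column j G) ` ({j. P (column j G)} \<times> (UNIV - {0}))"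
      then show "v \<in> {v \<in> U. P v}"
        using scale_closed columns P by auto
    next
      fix v assume v: "v \<in> {v \<in> U. P v}"
      then obtain j c where "c \<noteq> 0" "column j G = c *s v"
        using unique by blast
      moreover from this have "v = inverse c *s column j G"
        by simp
      ultimately show "v \<in> (\<lambda>(j, c). c *s column j G) ` ({j. P (column j G)} \<times> (UNIV - {0}))"
        using v P by (auto intro!: image_eqI[where x = "(j, inverse c)"])
    qed
  qed
  then have "card ({j. P (column j G)} \<times> (UNIV - {0 :: 'a})) = card {v \<in> U. P v}"
    by (rule bij_betw_same_card)
  then show ?thesis
    by (simp add: card_cartesian_product card_Diff_singleton)
qed

lemma gen_code_eq_range: "gen_code G = range ((*v) (transpose G))"
  unfolding gen_code_def by auto

locale complement_code =
  fixes Us :: "nat \<Rightarrow> ('a::{finite,field} ^ 'n) set" and h u :: nat and G :: "'a ^ 'm ^ 'n"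
  assumes subspace_Us: "\<And>i. i \<in> {1..h} \<Longrightarrow> vec.subspace (Us i)"
    and dim_Us: "\<And>i. i \<in> {1..h} \<Longrightarrow> vec.dim (Us i) = u"
    and Us_disjoint: "\<And>i j. i \<in> {1..h} \<Longrightarrow> j \<in> {1..h} \<Longrightarrow> i \<noteq> j \<Longrightarrow> Us i \<inter> Us j = {0}"
    and column_in: "\<And>j. column j G \<in> {v. v \<noteq> 0 \<and> (\<forall>i\<in>{1..h}. v \<notin> Us i)}"
    and column_unique: "\<And>v. v \<in> {v. v \<noteq> 0 \<and> (\<forall>i\<in>{1..h}. v \<notin> Us i)} \<Longrightarrow>
      \<exists>!j. \<exists>c::'a. c \<noteq> 0 \<and> column j G = c *s v"
begin

abbreviation points :: "('a ^ 'n) set" where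
  "points \<equiv> {v. v \<noteq> 0 \<and> (\<forall>i\<in>{1..h}. v \<notin> Us i)}"

lemma card_Us: "i \<in> {1..h} \<Longrightarrow> card (Us i) = CARD('a) ^ u"
  using card_subspace[OF subspace_Us] dim_Us by simp

lemma scale_points:
  assumes "v \<in> points" "c \<noteq> 0"
  shows "c *s v \<in> points"
proof -
  have "c *s v \<notin> Us i" if "i \<in> {1..h}" for i
  proof
    assume "c *s v \<in> Us i"
    then have "inverse c *s (c *s v) \<in> Us i"
      by (rule vec.subspace_scale[OF subspace_Us[OF that]])
    then show False
      using assms that by simp
  qed
  then show ?thesis
    using assms by simp
qed

lemma card_points: "card points = CARD('a) ^ CARD('n) - 1 - h * (CARD('a) ^ u - 1)"
proof -
  define B where "B = (\<Union>i\<in>{1..h}. Us i - {0})"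
  have "card B = (\<Sum>i\<in>{1..h}. card (Us i - {0}))"
    unfolding B_def
  proof (rule card_UN_disjoint)
    show "\<forall>i\<in>{1..h}. \<forall>j\<in>{1..h}. i \<noteq> j \<longrightarrow> (Us i - {0}) \<inter> (Us j - {0}) = {}"
      using Us_disjoint by blast
  qed auto
  also have "\<dots> = (\<Sum>i\<in>{1..h}. CARD('a) ^ u - 1)"
    by (rule sum.cong[OF refl]) (simp add: card_Diff_singleton card_Us vec.subspace_0[OF subspace_Us])
  finally have "card B = h * (CARD('a) ^ u - 1)"
    by simp
  moreover have "points = (UNIV - {0}) - B" "B \<subseteq> UNIV - {0}"
    unfolding B_def by auto
  ultimately show ?thesis
    by (simp add: card_Diff_subset card_Diff_singleton)
qed

lemma card_columns: "CARD('m) * (CARD('a) - 1) = card points"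
  using card_columns_mult[of points G "\<lambda>_. True"] scale_points column_in column_unique by simp

text \<open>The \<open>j\<close>-th entry of \<open>x v* G\<close> is \<open>f (column j G)\<close> for the linear form \<open>f\<close> of \<open>x\<close>,
  so the weight counts the points off the hyperplane \<open>f = 0\<close>.\<close>

lemma hamming_weight_codeword:
  assumes "x \<noteq> 0"
  shows "CARD('a) ^ (CARD('n) - 1) - h * CARD('a) ^ (u - 1) \<le> hamming_weight (x v* G)"
proof -
  let ?q = "CARD('a)"
  define f where "f v = (\<Sum>i\<in>UNIV. x $ i * v $ i)" for v :: "'a ^ 'n"
  have f_add: "f (v + w) = f v + f w" and f_scale: "f (c *s v) = c * f v" for v w c
    unfolding f_def by (simp_all add: algebra_simps sum.distrib sum_distrib_left)
  define N where "N = {v. f v \<noteq> 0}"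
  have "hamming_weight (x v* G) = card {j. f (column j G) \<noteq> 0}"
    unfolding hamming_weight_def f_def vector_matrix_mult_def column_def by (simp add: mult.commute)
  then have "hamming_weight (x v* G) * (?q - 1) = card {v \<in> points. f v \<noteq> 0}"
    using card_columns_mult[of points G "\<lambda>v. f v \<noteq> 0"] scale_points column_in column_unique
    by (simp add: f_scale)
  also have "{v \<in> points. f v \<noteq> 0} = N - (\<Union>i\<in>{1..h}. Us i \<inter> N)"
    unfolding N_def f_def by auto
  finally have weight: "hamming_weight (x v* G) * (?q - 1) = card (N - (\<Union>i\<in>{1..h}. Us i \<inter> N))" .
  obtain i0 where "x $ i0 \<noteq> 0"
    using assms by (metis vec_eq_iff zero_index)
  then have "f (axis i0 1) \<noteq> 0"
    unfolding f_def axis_def by (simp add: if_distrib cong: if_cong)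
  then have "card N = ?q ^ CARD('n) - ?q ^ (CARD('n) - 1)"
    using card_subspace_functional_nonzero[OF vec.subspace_UNIV f_add f_scale]
    unfolding N_def vec_dim_card by simp
  also have "\<dots> = (?q - 1) * ?q ^ (CARD('n) - 1)"
    by (rule power_diff_power_pred) (simp add: Suc_le_eq)
  finally have card_N: "card N = (?q - 1) * ?q ^ (CARD('n) - 1)" .
  have card_Us_N: "card (Us i \<inter> N) \<le> (?q - 1) * ?q ^ (u - 1)" if "i \<in> {1..h}" for i
  proof (cases "\<exists>v \<in> Us i. f v \<noteq> 0")
    case True
    then have "card (Us i \<inter> N) = ?q ^ u - ?q ^ (u - 1)"
      using card_subspace_functional_nonzero[OF subspace_Us[OF that] f_add f_scale] dim_Us[OF that]
      unfolding N_def by (auto simp: Int_def)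
    then show ?thesis
      using power_diff_power_pred[of u ?q] by (cases u) auto
  next
    case False
    then have "Us i \<inter> N = {}"
      unfolding N_def by auto
    then show ?thesis
      by simp
  qed
  have "card (\<Union>i\<in>{1..h}. Us i \<inter> N) \<le> (\<Sum>i\<in>{1..h}. card (Us i \<inter> N))"
    by (rule card_UN_le) simp
  also have "\<dots> \<le> (\<Sum>i\<in>{1..h}. (?q - 1) * ?q ^ (u - 1))"
    by (rule sum_mono) (rule card_Us_N)
  finally have "card (\<Union>i\<in>{1..h}. Us i \<inter> N) \<le> h * ((?q - 1) * ?q ^ (u - 1))"
    by simp
  have "(?q - 1) * (?q ^ (CARD('n) - 1) - h * ?q ^ (u - 1)) = card N - h * ((?q - 1) * ?q ^ (u - 1))"
    by (simp add: card_N diff_mult_distrib2 ac_simps)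
  also have "\<dots> \<le> card N - card (\<Union>i\<in>{1..h}. Us i \<inter> N)"
    by (rule diff_le_mono2) fact
  also have "\<dots> \<le> card (N - (\<Union>i\<in>{1..h}. Us i \<inter> N))"
    by (rule diff_card_le_card_Diff) simp
  also have "\<dots> = (?q - 1) * hamming_weight (x v* G)"
    using weight by (simp add: mult.commute)
  finally show ?thesis
    using two_le_card_field[where 'a = 'a] by simp
qed

context
  assumes distance_pos: "h * CARD('a) ^ (u - 1) < CARD('a) ^ (CARD('n) - 1)"
begin

lemma inj_codeword: "inj ((*v) (transpose G))"
proof -
  have "x = 0" if "transpose G *v x = 0" for x
    using that hamming_weight_codeword[of x] distance_pos by (cases "x = 0") auto
  then show ?thesis
    by (simp add: vec.linear_inj_iff_eq_0)
qed

lemma dim_gen_code: "vec.dim (gen_code G) = CARD('n)"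
proof -
  have inj: "inj_on ((*v) (transpose G)) (vec.span UNIV)"
    using inj_codeword by simp
  show ?thesis
    unfolding gen_code_eq_range vec.dim_image_eq[OF matrix_vector_mul_linear_gen inj] by (rule vec_dim_card)
qed

lemma min_dist_gen_code: "CARD('a) ^ (CARD('n) - 1) - h * CARD('a) ^ (u - 1) \<le> min_dist (gen_code G)"
proof -
  have subspace: "vec.subspace (gen_code G)"
    unfolding gen_code_eq_range by (rule vec.subspace_image[OF vec.subspace_UNIV])
  have "transpose G *v axis undefined 1 \<in> gen_code G - {0}"
    using inj_codeword unfolding gen_code_eq_range
    by (auto simp: vec.linear_inj_iff_eq_0 axis_eq_0_iff)
  then have nonempty: "gen_code G - {0} \<noteq> {}"
    by blast
  have "CARD('a) ^ (CARD('n) - 1) - h * CARD('a) ^ (u - 1) \<le> hamming_weight y"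
    if y: "y \<in> gen_code G - {0}" for y
  proof -
    obtain x where x: "y = x v* G"
      using y unfolding gen_code_def by auto
    moreover from this have "x \<noteq> 0"
      using y by auto
    ultimately show ?thesis
      using hamming_weight_codeword by simp
  qed
  then show ?thesis
    unfolding min_dist_subspace[OF subspace] using nonempty by (subst Min_ge_iff) auto
qed

end

end

theorem corollary2p1:
  fixes Us :: "nat \<Rightarrow> ('a::{finite,field} ^ 'n) set"
    and G :: "'a ^ 'm ^ 'n"
    and k u h :: nat
  assumes k: "CARD('n) = k" "k \<ge> 3"
    and u: "CARD('a) \<ge> u" "u \<ge> 2"
    and h: "h \<ge> 1"
    and Us_sub: "\<And>i. i \<in> {1..h} \<Longrightarrow> vec.subspace (Us i) \<and> vec.dim (Us i) = u"
    and Us_disj: "\<And>i j. i \<in> {1..h} \<Longrightarrow> j \<in> {1..h} \<Longrightarrow> i \<noteq> j \<Longrightarrow> Us i \<inter> Us j = {0}"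
    and cond: "CARD('a) ^ k - CARD('a) ^ (k - 1) > h * (CARD('a) ^ u - 1)"
    and cols: "\<And>j. column j G \<in> {v. v \<noteq> 0 \<and> (\<forall>i\<in>{1..h}. v \<notin> Us i)}"
    and reps: "\<And>v. v \<in> {v. v \<noteq> 0 \<and> (\<forall>i\<in>{1..h}. v \<notin> Us i)} \<Longrightarrow>
                 \<exists>!j. \<exists>c::'a. c \<noteq> 0 \<and> column j G = c *s v"
    and hq: "h \<le> u * CARD('a)"
  shows "distance_optimal (gen_code G)"
proof -
  interpret complement_code Us h u G
    using Us_sub Us_disj cols reps by unfold_locales auto
  let ?q = "CARD('a)"
  define D where "D = ?q ^ (k - 1) - h * ?q ^ (u - 1)"
  have q: "2 \<le> ?q"
    by (rule two_le_card_field)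
  have distance_pos: "h * ?q ^ (u - 1) < ?q ^ (k - 1)"
    using mult_power_pred_less[OF _ _ _ cond] q u k by simp
  have dim: "vec.dim (gen_code G) = k" and dist: "D \<le> min_dist (gen_code G)"
    using dim_gen_code min_dist_gen_code distance_pos k(1) unfolding D_def by simp_all
  show ?thesis
    unfolding distance_optimal_def dim
  proof
    assume "\<exists>C' :: ('a ^ 'm) set. linear_code k (min_dist (gen_code G) + 1) C'"
    then have "(\<Sum>i<k. ceil_div (min_dist (gen_code G) + 1) (?q ^ i)) \<le> CARD('m)"
      by (elim exE) (erule griesmer_bound)
    moreover have "(\<Sum>i<k. ceil_div (D + 1) (?q ^ i))
        \<le> (\<Sum>i<k. ceil_div (min_dist (gen_code G) + 1) (?q ^ i))"
      using dist by (intro sum_mono ceil_div_mono) simp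
    ultimately have "(?q - 1) * (\<Sum>i<k. ceil_div (D + 1) (?q ^ i)) \<le> CARD('m) * (?q - 1)"
      by (simp add: mult.commute)
    also have "\<dots> = ?q ^ k - 1 - h * (?q ^ u - 1)"
      using card_columns card_points k(1) by simp
    finally show False
      using griesmer_sum_gt[OF q u(1) h hq distance_pos] unfolding D_def by linarith
  qed
qed
end
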